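(* Let $G=(V,E)$ be a connected graph with $n$ vertices, $\tau$ a set of types with $|\tau|=k>1$, $f:\tau\to\mathbb{Q}_{\ge1}$ a fitness function, $\alpha\in\tau^+(f)$, $f^*=\max\{f(j):j\in\tau\setminus\{\alpha\}\}$, and suppose $f^*<f(\alpha)=f^+$. Let $M_0\in\Omega_0(G,\tau)$. Then $\mathbb{E}(A_\alpha(G,\tau,f,M_0))\le \frac{f^+}{f^+-f^*}(n+1)n^3$.
   Context: $f^+=\max_{i\in\tau}f(i)$, $\tau^+(f)=\{i:f(i)=f^+\}$. For $G=(V,E)$, $N(v)$ is the neighbourhood of $v$. For a state $S:V\to\tau$, $S|_{v\to w}$ equals $S$ except $w$ gets type $S(v)$. The Moran process $M(G,\tau,f,M_0)$: Markov chain on states from $M_0$; given $M_t$, choose $v$ with probability $f(M_t(v))/\sum_uf(M_t(u))$, then $w\in N(v)$ uniformly, set $M_{t+1}=M_t|_{v\to w}$. $V_j(t)=\{v:M_t(v)=j\}$. $\Omega_0(G,\tau)$ is the set of states $V\to\tau$ whose range is all of $\tau$. The absorption time of type $j$ is $A_j(G,\tau,f,M_0)=\min\{t\in\mathbb{Z}_{\ge0}: V_j(t)=V\text{ or }V_j(t)=\emptyset\}$. *)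

theory Defs
  imports "HOL-Probability.Probability"
begin

definition simple_graph :: "'v set \<Rightarrow> ('v \<times> 'v) set \<Rightarrow> bool" where
  "simple_graph V E \<longleftrightarrow> finite V \<and> E \<subseteq> V \<times> V \<and> sym E \<and> (\<forall>v. (v, v) \<notin> E)"

definition connected_graph :: "'v set \<Rightarrow> ('v \<times> 'v) set \<Rightarrow> bool" where
  "connected_graph V E \<longleftrightarrow> simple_graph V E \<and> (\<forall>u\<in>V. \<forall>v\<in>V. (u, v) \<in> E\<^sup>*)"

definition nbhd :: "('v \<times> 'v) set \<Rightarrow> 'v \<Rightarrow> 'v set" where
  "nbhd E v = {w. (v, w) \<in> E}"

definition fplus :: "'t set \<Rightarrow> ('t \<Rightarrow> real) \<Rightarrow> real" where
  "fplus \<tau> f = Max (f ` \<tau>)"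

definition tau_plus :: "'t set \<Rightarrow> ('t \<Rightarrow> real) \<Rightarrow> 't set" where
  "tau_plus \<tau> f = {i \<in> \<tau>. f i = fplus \<tau> f}"

definition Omega0 :: "'v set \<Rightarrow> 't set \<Rightarrow> ('v \<Rightarrow> 't) set" where
  "Omega0 V \<tau> = {S. S ` V = \<tau>}"

definition repl :: "('v \<Rightarrow> 't) \<Rightarrow> 'v \<Rightarrow> 'v \<Rightarrow> ('v \<Rightarrow> 't)" where
  "repl S v w = S(w := S v)"

definition moran_step :: "'v set \<Rightarrow> ('v \<times> 'v) set \<Rightarrow> ('t \<Rightarrow> real) \<Rightarrow> ('v \<Rightarrow> 't) \<Rightarrow> ('v \<Rightarrow> 't) pmf" where
  "moran_step V E f S =
     bind_pmf (embed_pmf (\<lambda>v. if v \<in> V then f (S v) / (\<Sum>u\<in>V. f (S u)) else 0))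
       (\<lambda>v. map_pmf (\<lambda>w. repl S v w) (pmf_of_set (nbhd E v)))"

definition absorbed :: "'v set \<Rightarrow> 't \<Rightarrow> ('v \<Rightarrow> 't) \<Rightarrow> bool" where
  "absorbed V j S \<longleftrightarrow> {v \<in> V. S v = j} = V \<or> {v \<in> V. S v = j} = {}"

primrec stopped_dist :: "'v set \<Rightarrow> ('v \<times> 'v) set \<Rightarrow> ('t \<Rightarrow> real) \<Rightarrow> 't \<Rightarrow> ('v \<Rightarrow> 't) \<Rightarrow> nat \<Rightarrow> ('v \<Rightarrow> 't) pmf" where
  "stopped_dist V E f j M0 0 = return_pmf M0"
| "stopped_dist V E f j M0 (Suc t) =
     bind_pmf (stopped_dist V E f j M0 t)
       (\<lambda>S. if absorbed V j S then return_pmf S else moran_step V E f S)"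

text \<open>P(A_j > t): the stopped chain is not yet absorbed at time t.\<close>
definition not_absorbed_prob :: "'v set \<Rightarrow> ('v \<times> 'v) set \<Rightarrow> ('t \<Rightarrow> real) \<Rightarrow> 't \<Rightarrow> ('v \<Rightarrow> 't) \<Rightarrow> nat \<Rightarrow> ennreal" where
  "not_absorbed_prob V E f j M0 t =
     emeasure (measure_pmf (stopped_dist V E f j M0 t)) {S. \<not> absorbed V j S}"

text \<open>E(A_j(G,tau,f,M0)) = sum_{t>=0} P(A_j > t) (tail-sum formula; value in [0,infinity]).\<close>
definition expected_absorption :: "'v set \<Rightarrow> ('v \<times> 'v) set \<Rightarrow> ('t \<Rightarrow> real) \<Rightarrow> 't \<Rightarrow> ('v \<Rightarrow> 't) \<Rightarrow> ennreal" where
  "expected_absorption V E f j M0 = (\<Sum>t. not_absorbed_prob V E f j M0 t)"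

end

theory Submission
  imports Defs
begin

text \<open>The potential \<phi>(S) = \<Sum>{1 / deg v | S v = \<alpha>} lies in [0, n].  Outside absorption a
  Moran step raises its expectation by the flux / W, where W \<le> n f+ is the total fitness and
  the flux sums f(S v) (1[S v = \<alpha>] - 1[S w = \<alpha>]) / (deg v deg w) over directed edges.
  Pairing each edge with its reverse turns the summands into
  (f(S v) - f(S w)) (1[S v = \<alpha>] - 1[S w = \<alpha>]) / (deg v deg w) \<ge> 0, as \<alpha> is fittest, and by
  connectivity some edge joins an \<alpha>-vertex to a non-\<alpha>-vertex, contributing at least
  2 (f+ - f*) / n^2.  So the drift is at least \<delta> = (f+ - f*) / (f+ n^3), and the
  additive drift argument bounds the sum over t of P(A > t) by n / \<delta>.\<close>

lemma integral_bind_pmf: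
  fixes h :: "'b \<Rightarrow> real"
  assumes "\<And>x. \<bar>h x\<bar> \<le> B"
  shows "(\<integral>x. h x \<partial>bind_pmf p q) = (\<integral>x. (\<integral>y. h y \<partial>q x) \<partial>p)"
  unfolding measure_pmf_bind
  by (rule integral_bind[where K="count_space UNIV" and B=B and B'=1])
     (auto simp: assms space_subprob_algebra prob_space_imp_subprob_space prob_space_measure_pmf)

lemma integrable_pmf_bounded:
  fixes h :: "'a \<Rightarrow> real"
  assumes "\<And>x. \<bar>h x\<bar> \<le> B"
  shows "integrable (measure_pmf p) h"
  using assms by (intro measure_pmf.integrable_const_bound[where B=B]) auto

lemma ennreal_suminf_le:
  fixes g :: "nat \<Rightarrow> real"
  assumes "\<And>t. 0 \<le> g t" and "\<And>t. (\<Sum>s<t. g s) \<le> C"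
  shows "(\<Sum>t. ennreal (g t)) \<le> ennreal C"
proof (rule suminf_le_const[OF summableI])
  show "(\<Sum>s<t. ennreal (g s)) \<le> ennreal C" for t
    using assms by (simp add: sum_ennreal ennreal_leI)
qed

lemma stopped_chain_expectation_step:
  fixes p :: "nat \<Rightarrow> 'a pmf" and \<phi> :: "'a \<Rightarrow> real"
  assumes p_Suc: "p (Suc t) = p t \<bind> (\<lambda>S. if stop S then return_pmf S else K S)"
    and \<phi>_nonneg: "\<And>S. 0 \<le> \<phi> S" and \<phi>_le: "\<And>S. \<phi> S \<le> B"
    and drift: "\<And>S. S \<in> set_pmf (p t) \<Longrightarrow> \<not> stop S \<Longrightarrow> \<phi> S + \<delta> \<le> (\<integral>x. \<phi> x \<partial>K S)"
  shows "(\<integral>S. \<phi> S \<partial>p t) + \<delta> * measure (p t) {S. \<not> stop S} \<le> (\<integral>S. \<phi> S \<partial>p (Suc t))"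
proof -
  define G where "G S = (\<integral>x. \<phi> x \<partial>(if stop S then return_pmf S else K S))" for S
  define A where "A = {S. \<not> stop S}"
  have \<phi>_abs: "\<bar>\<phi> S\<bar> \<le> B" for S using \<phi>_nonneg \<phi>_le by simp
  have int_\<phi>: "integrable q \<phi>" for q :: "'a pmf"
    by (rule integrable_pmf_bounded[of \<phi>, OF \<phi>_abs])
  have int_A: "integrable (p t) (indicator A :: 'a \<Rightarrow> real)"
    by (rule integrable_pmf_bounded[where B=1]) (simp add: indicator_def)
  have G_abs: "\<bar>G S\<bar> \<le> B" for S
    unfolding G_def using \<phi>_nonneg \<phi>_le
    by (simp add: integral_nonneg_AE measure_pmf.integral_le_const int_\<phi>)
  have "(\<integral>S. \<phi> S \<partial>p t) + \<delta> * measure (p t) A = (\<integral>S. \<phi> S + \<delta> * indicator A S \<partial>p t)"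
    using int_\<phi> int_A by simp
  also have "\<dots> \<le> (\<integral>S. G S \<partial>p t)"
  proof (rule integral_mono_AE)
    show "integrable (measure_pmf (p t)) (\<lambda>S. \<phi> S + \<delta> * indicator A S)"
      using int_\<phi> int_A by simp
    show "integrable (measure_pmf (p t)) G" using integrable_pmf_bounded[of G, OF G_abs] .
    show "AE S in measure_pmf (p t). \<phi> S + \<delta> * indicator A S \<le> G S"
      using drift by (auto simp: AE_measure_pmf_iff G_def A_def)
  qed
  also have "\<dots> = (\<integral>S. \<phi> S \<partial>p (Suc t))"
    unfolding p_Suc G_def by (rule integral_bind_pmf[OF \<phi>_abs, symmetric])
  finally show ?thesis unfolding A_def .
qed

lemma stopped_chain_additive_drift:
  fixes p :: "nat \<Rightarrow> 'a pmf" and \<phi> :: "'a \<Rightarrow> real"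
  assumes p_Suc: "\<And>t. p (Suc t) = p t \<bind> (\<lambda>S. if stop S then return_pmf S else K S)"
    and \<phi>_nonneg: "\<And>S. 0 \<le> \<phi> S" and \<phi>_le: "\<And>S. \<phi> S \<le> B"
    and drift: "\<And>t S. S \<in> set_pmf (p t) \<Longrightarrow> \<not> stop S \<Longrightarrow> \<phi> S + \<delta> \<le> (\<integral>x. \<phi> x \<partial>K S)"
    and \<delta>_pos: "0 < \<delta>"
  shows "(\<Sum>t. emeasure (p t) {S. \<not> stop S}) \<le> ennreal (B / \<delta>)"
proof -
  have accumulated: "\<delta> * (\<Sum>s<t. measure (p s) {S. \<not> stop S}) \<le> (\<integral>S. \<phi> S \<partial>p t)" for t
  proof (induction t)
    case 0
    then show ?case by (simp add: \<phi>_nonneg integral_nonneg_AE)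
  next
    case (Suc t)
    have "(\<integral>S. \<phi> S \<partial>p t) + \<delta> * measure (p t) {S. \<not> stop S} \<le> (\<integral>S. \<phi> S \<partial>p (Suc t))"
      by (rule stopped_chain_expectation_step[where p=p and t=t, OF p_Suc]) (use \<phi>_nonneg \<phi>_le drift in auto)
    with Suc show ?case by (simp add: distrib_left)
  qed
  have bounded: "(\<integral>S. \<phi> S \<partial>p t) \<le> B" for t
    using \<phi>_nonneg \<phi>_le
    by (intro measure_pmf.integral_le_const integrable_pmf_bounded[where B=B]) auto
  have "(\<Sum>s<t. measure (p s) {S. \<not> stop S}) \<le> B / \<delta>" for t
    using order_trans[OF accumulated bounded] \<delta>_pos by (simp add: pos_le_divide_eq mult.commute)
  then show ?thesis
    by (simp add: measure_pmf.emeasure_eq_measure ennreal_suminf_le)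
qed

lemma rtrancl_boundary_edge:
  assumes "(x, y) \<in> R\<^sup>*" "P x" "\<not> P y"
  shows "\<exists>v w. (v, w) \<in> R \<and> P v \<and> \<not> P w"
  using assms by (induction rule: rtrancl_induct) auto

lemma sum_sym_relation:
  fixes g :: "'a \<Rightarrow> 'a \<Rightarrow> 'b::comm_semiring_1"
  assumes "sym R"
  shows "2 * (\<Sum>(v, w)\<in>R. g v w) = (\<Sum>(v, w)\<in>R. g v w + g w v)"
proof -
  have "(\<Sum>(v, w)\<in>R. g w v) = (\<Sum>(v, w)\<in>prod.swap ` R. g v w)"
    by (subst sum.reindex) (auto simp: case_prod_beta)
  also have "prod.swap ` R = R"
    using assms by (force simp: sym_def)
  finally have "(\<Sum>(v, w)\<in>R. g w v) = (\<Sum>(v, w)\<in>R. g v w)" .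
  moreover have "(\<Sum>(v, w)\<in>R. g v w + g w v) = (\<Sum>(v, w)\<in>R. g v w) + (\<Sum>(v, w)\<in>R. g w v)"
    by (simp add: split_def sum.distrib)
  ultimately show ?thesis by (simp add: mult_2)
qed

definition graph_degree :: "('v \<times> 'v) set \<Rightarrow> 'v \<Rightarrow> nat" where
  "graph_degree E v = card (nbhd E v)"

lemma simple_graph_nbhd_subset: "simple_graph V E \<Longrightarrow> nbhd E v \<subseteq> V"
  by (auto simp: simple_graph_def nbhd_def)

lemma simple_graph_sum_edges:
  assumes "simple_graph V E"
  shows "(\<Sum>(v, w)\<in>E. g v w) = (\<Sum>v\<in>V. \<Sum>w\<in>nbhd E v. g v w)"
proof -
  have "E = Sigma V (nbhd E)" and "finite V"
    using assms by (auto simp: simple_graph_def nbhd_def)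
  moreover have "finite (nbhd E v)" for v
    using assms \<open>finite V\<close> simple_graph_nbhd_subset finite_subset by metis
  ultimately show ?thesis by (simp add: sum.Sigma)
qed

lemma connected_graph_nbhd_nonempty:
  assumes "connected_graph V E" "u \<in> V" "v \<in> V" "u \<noteq> v"
  shows "nbhd E v \<noteq> {}"
proof -
  have "(v, u) \<in> E\<^sup>*" using assms by (auto simp: connected_graph_def)
  then obtain w where "(v, w) \<in> E" using \<open>u \<noteq> v\<close> by (cases rule: converse_rtranclE) auto
  then show ?thesis by (auto simp: nbhd_def)
qed

definition type_potential :: "'v set \<Rightarrow> ('v \<times> 'v) set \<Rightarrow> 't \<Rightarrow> ('v \<Rightarrow> 't) \<Rightarrow> real" where
  "type_potential V E a S = (\<Sum>v\<in>V. of_bool (S v = a) / real (graph_degree E v))"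

lemma type_potential_nonneg: "0 \<le> type_potential V E a S"
  unfolding type_potential_def by (intro sum_nonneg) auto

lemma type_potential_le_card: "type_potential V E a S \<le> real (card V)"
proof -
  have "of_bool (S v = a) / real (graph_degree E v) \<le> 1" for v
    by (cases "graph_degree E v") (auto simp: divide_le_eq)
  then have "type_potential V E a S \<le> (\<Sum>v\<in>V. 1)"
    unfolding type_potential_def by (intro sum_mono)
  then show ?thesis by simp
qed

lemma type_potential_update:
  assumes "finite V" "w \<in> V"
  shows "type_potential V E a (S(w := x))
    = type_potential V E a S + (of_bool (x = a) - of_bool (S w = a)) / real (graph_degree E w)"
  using assms by (simp add: type_potential_def sum.remove diff_divide_distrib)

definition potential_flux :: "('v \<times> 'v) set \<Rightarrow> ('t \<Rightarrow> real) \<Rightarrow> 't \<Rightarrow> ('v \<Rightarrow> 't) \<Rightarrow> real" where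
  "potential_flux E f a S = (\<Sum>(v, w)\<in>E.
     f (S v) * (of_bool (S v = a) - of_bool (S w = a)) / real (graph_degree E v * graph_degree E w))"

locale moran_graph =
  fixes V :: "'v set" and E :: "('v \<times> 'v) set" and \<tau> :: "'t set" and f :: "'t \<Rightarrow> real"
  assumes simple: "simple_graph V E"
    and nonempty: "V \<noteq> {}"
    and no_isolated: "\<And>v. v \<in> V \<Longrightarrow> nbhd E v \<noteq> {}"
    and fitness_pos: "\<And>j. j \<in> \<tau> \<Longrightarrow> 0 < f j"
begin

lemma finite_V: "finite V"
  using simple by (simp add: simple_graph_def)

lemma finite_nbhd: "finite (nbhd E v)"
  using finite_V simple_graph_nbhd_subset[OF simple] by (rule finite_subset[rotated])

lemma degree_pos: "v \<in> V \<Longrightarrow> 0 < graph_degree E v"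
  using no_isolated finite_nbhd by (simp add: graph_degree_def card_gt_0_iff)

lemma degree_le_card: "graph_degree E v \<le> card V"
  unfolding graph_degree_def using finite_V simple_graph_nbhd_subset[OF simple] by (rule card_mono)

lemma total_fitness_pos: "S ` V \<subseteq> \<tau> \<Longrightarrow> 0 < (\<Sum>u\<in>V. f (S u))"
  using finite_V nonempty fitness_pos by (intro sum_pos) auto

lemma selection_weights:
  assumes "S ` V \<subseteq> \<tau>"
  defines "g \<equiv> \<lambda>v. if v \<in> V then f (S v) / (\<Sum>u\<in>V. f (S u)) else 0"
  shows "\<And>v. 0 \<le> g v" and "(\<integral>\<^sup>+v. g v \<partial>count_space UNIV) = 1"
proof -
  have W: "0 < (\<Sum>u\<in>V. f (S u))" using total_fitness_pos[OF assms(1)] .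
  show g_nonneg: "0 \<le> g v" for v
    unfolding g_def using W fitness_pos assms(1)
    by (auto simp: image_subset_iff intro!: divide_nonneg_nonneg less_imp_le)
  have "(\<integral>\<^sup>+v. g v \<partial>count_space UNIV) = (\<Sum>v\<in>V. ennreal (g v))"
    by (rule nn_integral_count_space') (auto simp: finite_V g_def)
  also have "\<dots> = ennreal (\<Sum>v\<in>V. g v)" using g_nonneg by simp
  also have "(\<Sum>v\<in>V. g v) = 1"
    unfolding g_def using W by (simp flip: sum_divide_distrib)
  finally show "(\<integral>\<^sup>+v. g v \<partial>count_space UNIV) = 1" by simp
qed

lemma set_pmf_moran_step:
  assumes "S ` V \<subseteq> \<tau>"
  shows "set_pmf (moran_step V E f S) \<subseteq> {repl S v w |v w. v \<in> V \<and> w \<in> nbhd E v}"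
  unfolding moran_step_def using no_isolated finite_nbhd
  by (auto simp: set_embed_pmf[OF selection_weights[OF assms]] split: if_splits)

lemma integral_moran_step:
  fixes h :: "('v \<Rightarrow> 't) \<Rightarrow> real"
  assumes S: "S ` V \<subseteq> \<tau>" and h: "\<And>S'. \<bar>h S'\<bar> \<le> B"
  shows "(\<integral>S'. h S' \<partial>moran_step V E f S)
    = (\<Sum>v\<in>V. f (S v) * (\<Sum>w\<in>nbhd E v. h (repl S v w)) / real (graph_degree E v)) / (\<Sum>u\<in>V. f (S u))"
proof -
  note weights = selection_weights[OF S]
  let ?g = "\<lambda>v. if v \<in> V then f (S v) / (\<Sum>u\<in>V. f (S u)) else 0"
  have "(\<integral>S'. h S' \<partial>moran_step V E f S)
      = (\<integral>v. (\<integral>S'. h S' \<partial>map_pmf (repl S v) (pmf_of_set (nbhd E v))) \<partial>embed_pmf ?g)"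
    unfolding moran_step_def by (rule integral_bind_pmf[OF h])
  also have "\<dots> = (\<Sum>v\<in>V. (\<integral>S'. h S' \<partial>map_pmf (repl S v) (pmf_of_set (nbhd E v))) * pmf (embed_pmf ?g) v)"
    by (rule integral_measure_pmf_real) (auto simp: finite_V set_embed_pmf[OF weights] split: if_splits)
  also have "\<dots> = (\<Sum>v\<in>V. f (S v) * (\<Sum>w\<in>nbhd E v. h (repl S v w)) / real (graph_degree E v) / (\<Sum>u\<in>V. f (S u)))"
    by (intro sum.cong refl)
       (simp add: pmf_embed_pmf[OF weights] integral_pmf_of_set finite_nbhd no_isolated graph_degree_def)
  finally show ?thesis by (simp add: sum_divide_distrib)
qed

lemma integral_type_potential_moran_step:
  assumes S: "S ` V \<subseteq> \<tau>"
  shows "(\<integral>S'. type_potential V E a S' \<partial>moran_step V E f S)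
    = type_potential V E a S + potential_flux E f a S / (\<Sum>u\<in>V. f (S u))"
proof -
  define W where "W = (\<Sum>u\<in>V. f (S u))"
  define \<phi> where "\<phi> = type_potential V E a"
  define X where "X v w = f (S v) * (of_bool (S v = a) - of_bool (S w = a))
                             / real (graph_degree E v * graph_degree E w)" for v w
  have per_vertex: "f (S v) * (\<Sum>w\<in>nbhd E v. \<phi> (repl S v w)) / real (graph_degree E v)
      = f (S v) * \<phi> S + (\<Sum>w\<in>nbhd E v. X v w)" if "v \<in> V" for v
  proof -
    define D where "D w = (of_bool (S v = a) - of_bool (S w = a)) / real (graph_degree E w)" for w
    have "(\<Sum>w\<in>nbhd E v. \<phi> (repl S v w)) = (\<Sum>w\<in>nbhd E v. \<phi> S + D w)"
      by (intro sum.cong refl)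
         (simp add: \<phi>_def D_def repl_def type_potential_update finite_V
           subsetD[OF simple_graph_nbhd_subset[OF simple]])
    also have "\<dots> = real (graph_degree E v) * \<phi> S + (\<Sum>w\<in>nbhd E v. D w)"
      by (simp add: sum.distrib graph_degree_def)
    finally have "f (S v) * (\<Sum>w\<in>nbhd E v. \<phi> (repl S v w)) / real (graph_degree E v)
        = f (S v) * \<phi> S + (\<Sum>w\<in>nbhd E v. f (S v) * D w / real (graph_degree E v))"
      using degree_pos[OF that] by (simp add: field_simps sum_distrib_left sum_divide_distrib)
    also have "(\<Sum>w\<in>nbhd E v. f (S v) * D w / real (graph_degree E v)) = (\<Sum>w\<in>nbhd E v. X v w)"
      by (simp add: X_def D_def mult.commute)
    finally show ?thesis .
  qed
  have "(\<integral>S'. \<phi> S' \<partial>moran_step V E f S)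
      = (\<Sum>v\<in>V. f (S v) * (\<Sum>w\<in>nbhd E v. \<phi> (repl S v w)) / real (graph_degree E v)) / W"
    unfolding W_def \<phi>_def
    by (rule integral_moran_step[OF S, where B="real (card V)"])
       (simp add: type_potential_nonneg type_potential_le_card)
  also have "\<dots> = (W * \<phi> S + (\<Sum>v\<in>V. \<Sum>w\<in>nbhd E v. X v w)) / W"
    by (simp add: per_vertex sum.distrib W_def sum_distrib_right)
  also have "(\<Sum>v\<in>V. \<Sum>w\<in>nbhd E v. X v w) = potential_flux E f a S"
    unfolding potential_flux_def X_def by (rule simple_graph_sum_edges[OF simple, symmetric])
  finally show ?thesis
    using total_fitness_pos[OF S] by (simp add: \<phi>_def W_def add_divide_distrib)
qed

lemma potential_flux_lower_bound:
  assumes S: "S ` V \<subseteq> \<tau>"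
    and fittest: "\<forall>j\<in>\<tau>. f j \<le> f a" and runner_up: "\<forall>j\<in>\<tau> - {a}. f j \<le> fs" and "fs \<le> f a"
    and edge: "(v0, w0) \<in> E" "S v0 = a" "S w0 \<noteq> a"
  shows "(f a - fs) / real (card V) ^ 2 \<le> potential_flux E f a S"
proof -
  define Y where "Y v w = (f (S v) - f (S w)) * (of_bool (S v = a) - of_bool (S w = a))
                            / real (graph_degree E v * graph_degree E w)" for v w
  have "sym E" and E_sub: "E \<subseteq> V \<times> V"
    using simple by (auto simp: simple_graph_def)
  have "finite E" using finite_subset[OF E_sub] finite_V by blast
  have v0w0: "v0 \<in> V" "w0 \<in> V" "v0 \<noteq> w0" "(w0, v0) \<in> E"
    using edge E_sub \<open>sym E\<close> by (auto simp: sym_def)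
  have "f (S v) * (of_bool (S v = a) - of_bool (S w = a)) / real (graph_degree E v * graph_degree E w)
      + f (S w) * (of_bool (S w = a) - of_bool (S v = a)) / real (graph_degree E w * graph_degree E v)
      = Y v w" for v w
    unfolding Y_def mult.commute[of "graph_degree E w"] add_divide_distrib[symmetric]
    by (simp add: algebra_simps)
  then have flux_symmetrized: "2 * potential_flux E f a S = (\<Sum>(v, w)\<in>E. Y v w)"
    unfolding potential_flux_def sum_sym_relation[OF \<open>sym E\<close>] by simp
  have Y_nonneg: "0 \<le> Y v w" if "(v, w) \<in> E" for v w
  proof -
    have "S v \<in> \<tau>" "S w \<in> \<tau>" using that E_sub S by auto
    then have "0 \<le> (f (S v) - f (S w)) * (of_bool (S v = a) - of_bool (S w = a))"
      using fittest by auto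
    then show ?thesis unfolding Y_def by simp
  qed
  have "(f a - fs) / real (card V) ^ 2 \<le> (f a - f (S w0)) / real (graph_degree E v0 * graph_degree E w0)"
  proof (rule frac_le)
    show "f a - fs \<le> f a - f (S w0)" using runner_up S v0w0 edge by auto
    show "real (graph_degree E v0 * graph_degree E w0) \<le> real (card V) ^ 2"
      unfolding power2_eq_square of_nat_mult by (intro mult_mono) (auto simp: degree_le_card)
  qed (use fittest S v0w0 edge degree_pos \<open>fs \<le> f a\<close> in auto)
  also have "\<dots> = Y v0 w0"
    using edge by (simp add: Y_def)
  finally have "(f a - fs) / real (card V) ^ 2 \<le> Y v0 w0" .
  moreover have "Y w0 v0 = Y v0 w0"
    unfolding Y_def by (simp add: algebra_simps)
  ultimately have "2 * ((f a - fs) / real (card V) ^ 2) \<le> Y v0 w0 + Y w0 v0"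
    by linarith
  also have "\<dots> = (\<Sum>(v, w)\<in>{(v0, w0), (w0, v0)}. Y v w)"
    using v0w0 by simp
  also have "\<dots> \<le> (\<Sum>(v, w)\<in>E. Y v w)"
    using edge v0w0 Y_nonneg \<open>finite E\<close> by (intro sum_mono2) auto
  finally show ?thesis unfolding flux_symmetrized[symmetric] by linarith
qed

lemma type_potential_drift:
  assumes S: "S ` V \<subseteq> \<tau>"
    and fittest: "\<forall>j\<in>\<tau>. f j \<le> f a" and runner_up: "\<forall>j\<in>\<tau> - {a}. f j \<le> fs" and "fs \<le> f a"
    and edge: "(v0, w0) \<in> E" "S v0 = a" "S w0 \<noteq> a"
  shows "type_potential V E a S + (f a - fs) / (f a * real (card V) ^ 3)
    \<le> (\<integral>S'. type_potential V E a S' \<partial>moran_step V E f S)"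
proof -
  define n where "n = real (card V)"
  define W where "W = (\<Sum>u\<in>V. f (S u))"
  have "v0 \<in> V" using edge simple by (auto simp: simple_graph_def)
  then have "a \<in> \<tau>" using S edge by auto
  have "0 < n" using finite_V nonempty by (simp add: n_def card_gt_0_iff)
  have "0 < W" unfolding W_def using total_fitness_pos[OF S] .
  have "W \<le> n * f a"
    unfolding W_def n_def using S fittest sum_mono[of V "\<lambda>u. f (S u)" "\<lambda>_. f a"] by auto
  have flux: "(f a - fs) / n ^ 2 \<le> potential_flux E f a S"
    unfolding n_def by (rule potential_flux_lower_bound[OF assms])
  have "(f a - fs) / (f a * n ^ 3) = ((f a - fs) / n ^ 2) / (n * f a)"
    by (simp add: power2_eq_square power3_eq_cube field_simps)
  also have "\<dots> \<le> potential_flux E f a S / W"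
  proof (rule frac_le)
    have "0 \<le> (f a - fs) / n ^ 2" using \<open>fs \<le> f a\<close> by simp
    with flux show "0 \<le> potential_flux E f a S" by linarith
  qed (use flux \<open>0 < W\<close> \<open>W \<le> n * f a\<close> in auto)
  finally show ?thesis
    unfolding integral_type_potential_moran_step[OF S] W_def n_def by simp
qed

lemma stopped_dist_types:
  assumes "M0 ` V \<subseteq> \<tau>"
  shows "S \<in> set_pmf (stopped_dist V E f j M0 t) \<Longrightarrow> S ` V \<subseteq> \<tau>"
proof (induction t arbitrary: S)
  case 0
  then show ?case using assms by simp
next
  case (Suc t)
  then obtain S0 where S0: "S0 \<in> set_pmf (stopped_dist V E f j M0 t)"
    and S: "S \<in> set_pmf (if absorbed V j S0 then return_pmf S0 else moran_step V E f S0)"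
    by auto
  have S0_types: "S0 ` V \<subseteq> \<tau>" using Suc.IH[OF S0] .
  show ?case
  proof (cases "absorbed V j S0")
    case False
    then obtain v w where "S = S0(w := S0 v)" "v \<in> V"
      using S set_pmf_moran_step[OF S0_types] by (auto simp: repl_def)
    then show ?thesis using S0_types by auto
  qed (use S S0_types in simp)
qed

theorem expected_absorption_le:
  assumes connected: "connected_graph V E"
    and "a \<in> \<tau>" and fittest: "\<forall>j\<in>\<tau>. f j \<le> f a" and runner_up: "\<forall>j\<in>\<tau> - {a}. f j \<le> fs"
    and "fs < f a" and M0: "M0 ` V \<subseteq> \<tau>"
  shows "expected_absorption V E f a M0 \<le> ennreal (f a / (f a - fs) * real (card V) ^ 4)"
proof -
  define n where "n = real (card V)"
  define \<delta> where "\<delta> = (f a - fs) / (f a * n ^ 3)"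
  have "0 < n" using finite_V nonempty by (simp add: n_def card_gt_0_iff)
  have "0 < f a" using fitness_pos \<open>a \<in> \<tau>\<close> .
  have drift: "type_potential V E a S + \<delta> \<le> (\<integral>S'. type_potential V E a S' \<partial>moran_step V E f S)"
    if "S \<in> set_pmf (stopped_dist V E f a M0 t)" "\<not> absorbed V a S" for t S
  proof -
    from \<open>\<not> absorbed V a S\<close> obtain x y where "x \<in> V" "S x = a" "y \<in> V" "S y \<noteq> a"
      unfolding absorbed_def by blast
    with connected obtain v0 w0 where "(v0, w0) \<in> E" "S v0 = a" "S w0 \<noteq> a"
      using rtrancl_boundary_edge[of x y E "\<lambda>v. S v = a"] by (auto simp: connected_graph_def)
    with stopped_dist_types[OF M0 that(1)] show ?thesis
      unfolding \<delta>_def n_def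
      using type_potential_drift fittest runner_up \<open>fs < f a\<close> by simp
  qed
  have "expected_absorption V E f a M0 \<le> ennreal (n / \<delta>)"
    unfolding expected_absorption_def not_absorbed_prob_def
  proof (rule stopped_chain_additive_drift[where K = "moran_step V E f" and \<phi> = "type_potential V E a"])
    show "0 < \<delta>" unfolding \<delta>_def using \<open>fs < f a\<close> \<open>0 < f a\<close> \<open>0 < n\<close> by simp
  qed (use drift type_potential_nonneg type_potential_le_card in \<open>auto simp: n_def\<close>)
  also have "n / \<delta> = f a / (f a - fs) * n ^ 4"
    unfolding \<delta>_def using \<open>fs < f a\<close> \<open>0 < f a\<close> \<open>0 < n\<close> by (simp add: field_simps eval_nat_numeral)
  finally show ?thesis unfolding n_def .
qed

end

lemma moran_graph_if_connected:
  assumes "connected_graph V E" "u \<in> V" "v \<in> V" "u \<noteq> v" "\<And>j. j \<in> \<tau> \<Longrightarrow> 0 < f j"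
  shows "moran_graph V E \<tau> f"
proof
  show "nbhd E w \<noteq> {}" if "w \<in> V" for w
  proof -
    obtain z where "z \<in> V" "z \<noteq> w" using assms(2-4) by blast
    then show ?thesis using connected_graph_nbhd_nonempty[OF assms(1) _ that] by blast
  qed
qed (use assms in \<open>auto simp: connected_graph_def\<close>)

theorem corollary14:
  fixes V :: "'v set" and E :: "('v \<times> 'v) set" and \<tau> :: "'t set"
    and f :: "'t \<Rightarrow> real" and \<alpha> :: 't and M0 :: "'v \<Rightarrow> 't"
  assumes G: "connected_graph V E"
    and tau_fin: "finite \<tau>" and k_gt1: "card \<tau> > 1"
    and f_rat: "\<forall>j\<in>\<tau>. f j \<in> \<rat> \<and> f j \<ge> 1"
    and alpha: "\<alpha> \<in> tau_plus \<tau> f"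
    and fstar: "Max (f ` (\<tau> - {\<alpha>})) < f \<alpha>"
    and M0: "M0 \<in> Omega0 V \<tau>"
  shows "expected_absorption V E f \<alpha> M0
         \<le> ennreal (fplus \<tau> f / (fplus \<tau> f - Max (f ` (\<tau> - {\<alpha>})))
                    * (real (card V) + 1) * real (card V) ^ 3)"
proof -
  define fs where "fs = Max (f ` (\<tau> - {\<alpha>}))"
  have "\<alpha> \<in> \<tau>" and f_\<alpha>: "f \<alpha> = fplus \<tau> f"
    using alpha by (auto simp: tau_plus_def)
  have "\<not> \<tau> \<subseteq> {\<alpha>}" using k_gt1 card_mono[of "{\<alpha>}" \<tau>] by auto
  then obtain \<beta> where "\<beta> \<in> \<tau>" "\<beta> \<noteq> \<alpha>" by blast
  have types: "M0 ` V = \<tau>" using M0 by (simp add: Omega0_def)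
  obtain u v where "u \<in> V" "M0 u = \<alpha>" "v \<in> V" "M0 v = \<beta>"
    using \<open>\<alpha> \<in> \<tau>\<close> \<open>\<beta> \<in> \<tau>\<close> unfolding types[symmetric] by blast
  then interpret moran_graph V E \<tau> f
    using \<open>\<beta> \<noteq> \<alpha>\<close> f_rat by (intro moran_graph_if_connected[OF G, of u v]) force+
  have "expected_absorption V E f \<alpha> M0 \<le> ennreal (f \<alpha> / (f \<alpha> - fs) * real (card V) ^ 4)"
  proof (rule expected_absorption_le[OF G \<open>\<alpha> \<in> \<tau>\<close>])
    show "\<forall>j\<in>\<tau>. f j \<le> f \<alpha>" and "\<forall>j\<in>\<tau> - {\<alpha>}. f j \<le> fs"
      using tau_fin by (simp_all add: f_\<alpha> fplus_def fs_def)
  qed (use fstar types in \<open>auto simp: fs_def\<close>)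
  also have "\<dots> \<le> ennreal (f \<alpha> / (f \<alpha> - fs) * ((real (card V) + 1) * real (card V) ^ 3))"
    using fitness_pos[OF \<open>\<alpha> \<in> \<tau>\<close>] fstar
      mult_right_mono[of "real (card V)" "real (card V) + 1" "real (card V) ^ 3"]
    by (intro ennreal_leI mult_left_mono) (auto simp: fs_def eval_nat_numeral)
  finally show ?thesis unfolding fs_def f_\<alpha> mult.assoc .
qed

end
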